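(* Let $\mu\in\mathcal P_c^*(\mathbb R^2)$. Then $\mathcal N_{\mathrm m}[\mu]\in L^\infty_\rho(\mathbb R)$.
   Context: $\mathbb S_1=\{x\in\mathbb R^2:\|x\|=1\}$; $\mathcal R_\theta[\mu]=(\langle\cdot,\theta\rangle)_\#\mu$. Fix a reference Borel probability measure $\rho$ on $\mathbb R$ without atoms. For a probability measure $\nu$ on $\mathbb R$ with $F_\nu(t)=\nu((-\infty,t])$, $F_\nu^{[-1]}(t)=\inf\{s:F_\nu(s)>t\}$ and the CDT is $\hat\nu=F_\nu^{[-1]}\circ F_\rho$; $\widehat{\mathcal R}_\theta[\mu]$ is the CDT of $\mathcal R_\theta[\mu]$. For $g\in L^2_\rho(\mathbb R)$, $\operatorname{mean}(g)=\int g\,\mathrm d\rho$, $\operatorname{std}(g)=(\int|g-\operatorname{mean}(g)|^2\mathrm d\rho)^{1/2}$. $\mathcal P_c^*(\mathbb R^2)$ is the set of compactly supported Borel probability measures on $\mathbb R^2$ whose support has affine hull of dimension $>1$. For such $\mu$: $\mathcal N_\theta[\mu](t)=\big(\widehat{\mathcal R}_\theta[\mu](t)-\operatorname{mean}(\widehat{\mathcal R}_\theta[\mu])\big)/\operatorname{std}(\widehat{\mathcal R}_\theta[\mu])$ and the max-normalized R-CDT is $\mathcal N_{\mathrm m}[\mu](t)=\sup_{\theta\in\mathbb S_1}\mathcal N_\theta[\mu](t)$, $t\in\mathbb R$. *)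

theory Defs
  imports "HOL-Analysis.Analysis" "HOL-Probability.Probability"
begin

definition S1 :: "(real^2) set" where
  "S1 = {x. norm x = 1}"

definition msupp :: "'a::metric_space measure \<Rightarrow> 'a set" where
  "msupp M = {x. \<forall>e>0. emeasure M (ball x e) > 0}"

definition Pc_star :: "(real^2) measure set" where
  "Pc_star = {\<mu>. prob_space \<mu> \<and> sets \<mu> = sets borel \<and> compact (msupp \<mu>) \<and> aff_dim (msupp \<mu>) > 1}"

definition radon :: "real^2 \<Rightarrow> (real^2) measure \<Rightarrow> real measure" where
  "radon \<theta> \<mu> = distr \<mu> borel (\<lambda>x. inner x \<theta>)"

definition cdf_of :: "real measure \<Rightarrow> real \<Rightarrow> real" where
  "cdf_of \<nu> t = measure \<nu> {..t}"

definition gen_inv :: "(real \<Rightarrow> real) \<Rightarrow> real \<Rightarrow> real" where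
  "gen_inv F t = Inf {s. F s > t}"

definition cdt :: "real measure \<Rightarrow> real measure \<Rightarrow> real \<Rightarrow> real" where
  "cdt \<rho> \<nu> = gen_inv (cdf_of \<nu>) \<circ> cdf_of \<rho>"

definition mean_rho :: "real measure \<Rightarrow> (real \<Rightarrow> real) \<Rightarrow> real" where
  "mean_rho \<rho> g = (\<integral>t. g t \<partial>\<rho>)"

definition std_rho :: "real measure \<Rightarrow> (real \<Rightarrow> real) \<Rightarrow> real" where
  "std_rho \<rho> g = sqrt (\<integral>t. (g t - mean_rho \<rho> g)\<^sup>2 \<partial>\<rho>)"

definition Ntheta :: "real measure \<Rightarrow> real^2 \<Rightarrow> (real^2) measure \<Rightarrow> real \<Rightarrow> real" where
  "Ntheta \<rho> \<theta> \<mu> t =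
     (cdt \<rho> (radon \<theta> \<mu>) t - mean_rho \<rho> (cdt \<rho> (radon \<theta> \<mu>))) / std_rho \<rho> (cdt \<rho> (radon \<theta> \<mu>))"

text \<open>Max-normalized R-CDT; the supremum is taken in the extended reals so that it is always defined.\<close>
definition Nmax :: "real measure \<Rightarrow> (real^2) measure \<Rightarrow> real \<Rightarrow> ereal" where
  "Nmax \<rho> \<mu> t = (SUP \<theta>\<in>S1. ereal (Ntheta \<rho> \<theta> \<mu> t))"

definition Linf :: "real measure \<Rightarrow> (real \<Rightarrow> ereal) \<Rightarrow> bool" where
  "Linf \<rho> f \<longleftrightarrow> f \<in> borel_measurable \<rho> \<and> (\<exists>C::real. AE t in \<rho>. \<bar>f t\<bar> \<le> ereal C)"

end

theory Submission
  imports Defs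
begin

(* All projections of \<mu> are supported in [-R, R], so every CDT (and its mean) is bounded by R,
   except for one junk value on the null set where F\<^sub>\<rho> = 1.  The support of \<mu> is not contained
   in a line; compactness of the circle then yields finitely many support points such that in
   every direction \<theta> two of them are D apart.  Balls of radius D/4 around these points have
   mass at least e > 0, so each CDT is at most some a on a \<rho>-set of measure e and at least
   a + D/2 on another one; hence its standard deviation is at least sqrt e * D/4, uniformly in \<theta>.
   The normalized CDTs are therefore uniformly bounded.  Each of them is nondecreasing where
   F\<^sub>\<rho> < 1 and constant elsewhere, and so is their supremum, which is thus measurable. *)

lemma borel_measurable_mono_on_Compl_const:
  fixes f :: "real \<Rightarrow> real"
  assumes "A \<in> sets borel" "mono_on A f" "\<And>s t. s \<notin> A \<Longrightarrow> t \<notin> A \<Longrightarrow> f s = f t"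
  shows "f \<in> borel_measurable borel"
proof (rule borel_measurable_piecewise_mono[of "{A, - A}"])
  have "mono_on (- A) f"
    using assms(3) by (intro mono_onI) (metis ComplD order.refl)
  then show "mono_on c f" if "c \<in> {A, - A}" for c
    using that assms(2) by blast
qed (use assms(1) in auto)

lemma borel_measurable_ereal_mono_on_Compl_const:
  fixes f :: "real \<Rightarrow> ereal"
  assumes "A \<in> sets borel" "mono_on A f" "\<And>s t. s \<notin> A \<Longrightarrow> t \<notin> A \<Longrightarrow> f s = f t"
    and finite: "\<And>t. \<bar>f t\<bar> \<noteq> \<infinity>"
  shows "f \<in> borel_measurable borel"
proof -
  have f_eq: "f = (\<lambda>t. ereal (real_of_ereal (f t)))"
    using finite by (simp add: fun_eq_iff ereal_real)
  have "mono_on A (\<lambda>t. real_of_ereal (f t))"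
  proof (rule mono_onI)
    fix s t assume "s \<in> A" "t \<in> A" "s \<le> t"
    then have "ereal (real_of_ereal (f s)) \<le> ereal (real_of_ereal (f t))"
      using mono_onD[OF assms(2)] f_eq by metis
    then show "real_of_ereal (f s) \<le> real_of_ereal (f t)"
      by simp
  qed
  then have "(\<lambda>t. real_of_ereal (f t)) \<in> borel_measurable borel"
    using assms(1,3) by (intro borel_measurable_mono_on_Compl_const[of A]) metis+
  then show ?thesis
    by (subst f_eq) (rule borel_measurable_ereal)
qed

lemma mono_on_SUP:
  fixes f :: "'i \<Rightarrow> 'a::order \<Rightarrow> 'b::complete_lattice"
  assumes "\<And>i. i \<in> I \<Longrightarrow> mono_on A (f i)"
  shows "mono_on A (\<lambda>t. SUP i\<in>I. f i t)"
  using assms by (intro mono_onI SUP_mono) (blast dest: mono_onD)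

lemma abs_SUP_ereal_le:
  assumes "I \<noteq> {}" "\<And>i. i \<in> I \<Longrightarrow> \<bar>f i\<bar> \<le> C"
  shows "\<bar>SUP i\<in>I. ereal (f i)\<bar> \<le> ereal C"
proof (rule ereal_abs_leI)
  show "(SUP i\<in>I. ereal (f i)) \<le> ereal C"
    using assms(2) by (intro SUP_least) (simp add: abs_le_iff)
  obtain i where "i \<in> I"
    using assms(1) by blast
  then have "- ereal C \<le> ereal (f i)"
    using assms(2)[of i] by (simp add: abs_le_iff)
  also have "\<dots> \<le> (SUP i\<in>I. ereal (f i))"
    using \<open>i \<in> I\<close> by (rule SUP_upper)
  finally show "- (SUP i\<in>I. ereal (f i)) \<le> ereal C"
    by (simp add: ereal_uminus_le_reorder)
qed

lemma (in prob_space) min_prob_mult_le_expectation_square_dev: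
  fixes g :: "'a \<Rightarrow> real"
  assumes integrable: "integrable M (\<lambda>t. (g t - m)\<^sup>2)"
    and events: "L \<in> events" "H \<in> events"
    and below: "\<And>t. t \<in> L \<Longrightarrow> g t \<le> a" and above: "\<And>t. t \<in> H \<Longrightarrow> b \<le> g t" and "a < b"
  shows "min (prob L) (prob H) * ((b - a) / 2)\<^sup>2 \<le> expectation (\<lambda>t. (g t - m)\<^sup>2)"
proof -
  let ?c = "((b - a) / 2)\<^sup>2"
  have [measurable]: "(\<lambda>t. (g t - m)\<^sup>2) \<in> borel_measurable M"
    using integrable by (rule borel_measurable_integrable)
  have square_ge: "?c \<le> z\<^sup>2" if "(b - a) / 2 \<le> \<bar>z\<bar>" for z
    using power_mono[OF that, of 2] \<open>a < b\<close> by simp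
  have Markov: "prob S * ?c \<le> expectation (\<lambda>t. (g t - m)\<^sup>2)"
    if "S \<in> events" "\<And>t. t \<in> S \<Longrightarrow> ?c \<le> (g t - m)\<^sup>2" for S
  proof -
    have "prob S \<le> prob {t \<in> space M. ?c \<le> (g t - m)\<^sup>2}"
      using that sets.sets_into_space by (intro finite_measure_mono) (auto, measurable)
    also have "\<dots> \<le> expectation (\<lambda>t. (g t - m)\<^sup>2) / ?c"
      using \<open>a < b\<close> by (intro integral_Markov_inequality_measure[OF integrable \<open>S \<in> events\<close>]) auto
    finally show ?thesis
      using \<open>a < b\<close> by (simp add: field_simps)
  qed
  show ?thesis
  proof (cases "(a + b) / 2 \<le> m")
    case True
    then have "(b - a) / 2 \<le> \<bar>g t - m\<bar>" if "t \<in> L" for t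
      using below[OF that] \<open>(a + b) / 2 \<le> m\<close> by (simp add: abs_if field_simps)
    then have "prob L * ?c \<le> expectation (\<lambda>t. (g t - m)\<^sup>2)"
      by (intro Markov events square_ge)
    then show ?thesis
      by (rule order_trans[rotated]) (simp add: mult_right_mono)
  next
    case False
    then have "(b - a) / 2 \<le> \<bar>g t - m\<bar>" if "t \<in> H" for t
      using above[OF that] \<open>\<not> (a + b) / 2 \<le> m\<close> by (simp add: abs_if field_simps)
    then have "prob H * ?c \<le> expectation (\<lambda>t. (g t - m)\<^sup>2)"
      by (intro Markov events square_ge)
    then show ?thesis
      by (rule order_trans[rotated]) (simp add: mult_right_mono)
  qed
qed

lemma AE_in_msupp:
  fixes M :: "'a::{metric_space, second_countable_topology} measure"
  assumes "sets M = sets borel"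
  shows "AE x in M. x \<in> msupp M"
proof -
  define \<F> where "\<F> = {ball x e | x e. 0 < e \<and> emeasure M (ball x e) = 0}"
  have "open S" if "S \<in> \<F>" for S
    using that unfolding \<F>_def by blast
  then obtain \<G> where \<G>: "\<G> \<subseteq> \<F>" "countable \<G>" "\<Union>\<G> = \<Union>\<F>"
    by (rule Lindelof)
  have "S \<in> null_sets M" if S: "S \<in> \<F>" for S
  proof -
    obtain x e where "S = ball x e" "emeasure M (ball x e) = 0"
      using S unfolding \<F>_def by blast
    then show ?thesis
      using assms by (simp add: null_setsI)
  qed
  then have "\<Union>\<G> \<in> null_sets M"
    using \<G>(1,2) null_sets_UN'[of \<G> "\<lambda>S. S" M] by auto
  moreover have "x \<in> \<Union>\<G>" if x: "x \<notin> msupp M" for x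
  proof -
    obtain e where "0 < e" "\<not> 0 < emeasure M (ball x e)"
      using x unfolding msupp_def by blast
    then have "ball x e \<in> \<F>"
      unfolding \<F>_def by (auto simp: not_less)
    then show ?thesis
      unfolding \<G>(3) using \<open>0 < e\<close> by (meson UnionI centre_in_ball)
  qed
  ultimately show ?thesis
    by (intro AE_I'[of "\<Union>\<G>"]) blast+
qed

lemma cdf_of_eq_cdf: "cdf_of = cdf"
  by (simp add: fun_eq_iff cdf_of_def cdf_def)

lemma (in real_distribution) borel_measurable_cdf [measurable]: "cdf M \<in> borel_measurable borel"
  by (intro borel_measurable_mono) (simp add: mono_def cdf_nondecreasing)

lemma (in real_distribution) cdf_less_eq_lessThan:
  assumes atomless: "\<And>x. measure M {x} = 0" and "0 < p" "p \<le> cdf M t0"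
  obtains s where "{t. cdf M t < p} = {..<s}" "p \<le> cdf M s"
proof -
  define A where "A = {t. p \<le> cdf M t}"
  have "closed A"
    unfolding A_def using atomless isCont_cdf
    by (intro closed_Collect_le continuous_intros) (simp add: continuous_at_imp_continuous_on)
  from order_tendstoD(2)[OF cdf_lim_at_bot \<open>0 < p\<close>]
  obtain N where N: "\<And>t. t \<le> N \<Longrightarrow> cdf M t < p"
    by (auto simp: eventually_at_bot_linorder)
  have "N \<le> t" if "t \<in> A" for t
    using that N[of t] unfolding A_def by (cases "t \<le> N") auto
  then have "bdd_below A"
    by (rule bdd_belowI)
  moreover have "A \<noteq> {}"
    using \<open>p \<le> cdf M t0\<close> unfolding A_def by blast
  ultimately have "Inf A \<in> A"
    using \<open>closed A\<close> closed_contains_Inf by blast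
  have "{t. cdf M t < p} = {..<Inf A}"
  proof (intro set_eqI iffI)
    fix t assume "t \<in> {t. cdf M t < p}"
    then have "cdf M t < p" by simp
    show "t \<in> {..<Inf A}"
    proof (rule ccontr)
      assume "t \<notin> {..<Inf A}"
      then have "cdf M (Inf A) \<le> cdf M t"
        by (simp add: cdf_nondecreasing)
      with \<open>Inf A \<in> A\<close> \<open>cdf M t < p\<close> show False
        unfolding A_def by simp
    qed
  next
    fix t assume "t \<in> {..<Inf A}"
    then have "t \<notin> A"
      by (metis cInf_lower \<open>bdd_below A\<close> lessThan_iff not_le)
    then show "t \<in> {t. cdf M t < p}"
      unfolding A_def by simp
  qed
  with \<open>Inf A \<in> A\<close> show ?thesis
    unfolding A_def by (intro that) simp_all
qed

lemma (in real_distribution) measure_cdf_less: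
  assumes atomless: "\<And>x. measure M {x} = 0" and p: "0 \<le> p" "p \<le> 1"
  shows "measure M {t. cdf M t < p} = p"
proof (cases "\<exists>t0. p \<le> cdf M t0")
  case False
  then have "1 \<le> p"
    by (intro tendsto_upperbound[OF cdf_lim_at_top_prob]) (auto simp: not_le less_imp_le)
  with False p show ?thesis
    using prob_space by (simp add: not_le)
next
  case True
  show ?thesis
  proof (cases "p = 0")
    case True
    then show ?thesis by (simp add: not_less cdf_nonneg leD)
  next
    case False
    with p have "0 < p"
      by simp
    from \<open>\<exists>t0. p \<le> cdf M t0\<close> obtain t0 where "p \<le> cdf M t0" ..
    with \<open>0 < p\<close> obtain s where s: "{t. cdf M t < p} = {..<s}" "p \<le> cdf M s"
      by (rule cdf_less_eq_lessThan[OF atomless])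
    then have "cdf M t < p" if "t < s" for t
      using that by blast
    then have "measure M {..<s} \<le> p"
      by (intro tendsto_upperbound[OF cdf_at_left])
        (auto simp: eventually_at_left_field intro!: exI[of _ "s - 1"] less_imp_le)
    moreover have "measure M {..<s} = cdf M s"
      using finite_measure_Union[of "{..<s}" "{s}"] atomless
      by (simp add: cdf_def ivl_disj_un(2)[symmetric])
    ultimately show ?thesis
      unfolding s(1) using s(2) by linarith
  qed
qed

lemma (in real_distribution) measure_cdf_between:
  assumes atomless: "\<And>x. measure M {x} = 0" and "0 \<le> p" "p \<le> 1"
  shows "measure M {t. p \<le> cdf M t \<and> cdf M t < 1} = 1 - p"
proof -
  have "{t. p \<le> cdf M t \<and> cdf M t < 1} = {t. cdf M t < 1} - {t. cdf M t < p}"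
    by auto
  also have "measure M \<dots> = measure M {t. cdf M t < 1} - measure M {t. cdf M t < p}"
    using \<open>p \<le> 1\<close> by (intro finite_measure_Diff) auto
  finally show ?thesis
    using assms by (simp add: measure_cdf_less)
qed

locale bounded_real_distribution = real_distribution +
  fixes R :: real
  assumes AE_abs_le: "AE x in M. \<bar>x\<bar> \<le> R"
begin

lemma cdf_eq_0: "s < -R \<Longrightarrow> cdf M s = 0"
  using AE_abs_le unfolding cdf_def by (subst prob_eq_0) (auto elim!: eventually_mono)

lemma cdf_eq_1: "R \<le> s \<Longrightarrow> cdf M s = 1"
  using AE_abs_le unfolding cdf_def by (subst prob_eq_1) (auto elim!: eventually_mono)

lemma cdf_greater_set_bounds:
  assumes "0 \<le> u" "u < 1"
  shows "R \<in> {s. u < cdf M s}" and "bdd_below {s. u < cdf M s}"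
    and "\<And>s. s \<in> {s. u < cdf M s} \<Longrightarrow> -R \<le> s"
proof -
  show "R \<in> {s. u < cdf M s}"
    using assms cdf_eq_1[of R] by simp
  show lower: "-R \<le> s" if "s \<in> {s. u < cdf M s}" for s
    using that assms cdf_eq_0[of s] by (cases "s < -R") auto
  then show "bdd_below {s. u < cdf M s}"
    by (rule bdd_belowI)
qed

lemma gen_inv_cdf_le:
  assumes "0 \<le> u" "u < cdf M a"
  shows "gen_inv (cdf M) u \<le> a"
proof -
  have "u < 1"
    using assms(2) cdf_bounded_prob[of a] by linarith
  then show ?thesis
    unfolding gen_inv_def using assms cdf_greater_set_bounds[of u]
    by (intro cInf_lower) auto
qed

lemma gen_inv_cdf_ge:
  assumes "measure M {..<b} \<le> u" "u < 1"
  shows "b \<le> gen_inv (cdf M) u"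
  unfolding gen_inv_def
proof (rule cInf_greatest)
  show "{s. u < cdf M s} \<noteq> {}"
    using cdf_greater_set_bounds(1)[of u] assms order_trans[OF measure_nonneg] by blast
  show "b \<le> s" if "s \<in> {s. u < cdf M s}" for s
  proof (rule ccontr)
    assume "\<not> b \<le> s"
    then have "cdf M s \<le> measure M {..<b}"
      unfolding cdf_def by (intro finite_measure_mono) auto
    with that assms show False by simp
  qed
qed

lemma abs_gen_inv_cdf_le:
  assumes "0 \<le> u" "u < 1"
  shows "\<bar>gen_inv (cdf M) u\<bar> \<le> R"
proof -
  have "gen_inv (cdf M) u \<le> R"
    using assms cdf_eq_1[of R] by (intro gen_inv_cdf_le) auto
  moreover have "-R \<le> gen_inv (cdf M) u"
    unfolding gen_inv_def using assms cdf_greater_set_bounds[of u]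
    by (intro cInf_greatest) auto
  ultimately show ?thesis
    by (intro abs_leI) auto
qed

lemma gen_inv_cdf_mono:
  assumes "0 \<le> u" "u \<le> v" "v < 1"
  shows "gen_inv (cdf M) u \<le> gen_inv (cdf M) v"
  unfolding gen_inv_def using assms cdf_greater_set_bounds[of u] cdf_greater_set_bounds[of v]
  by (intro cInf_superset_mono) auto

end

definition normalized_cdt :: "real measure \<Rightarrow> real measure \<Rightarrow> real \<Rightarrow> real" where
  "normalized_cdt \<rho> \<nu> t = (cdt \<rho> \<nu> t - mean_rho \<rho> (cdt \<rho> \<nu>)) / std_rho \<rho> (cdt \<rho> \<nu>)"

lemma Ntheta_eq_normalized_cdt: "Ntheta \<rho> \<theta> \<mu> = normalized_cdt \<rho> (radon \<theta> \<mu>)"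
  by (simp add: fun_eq_iff Ntheta_def normalized_cdt_def)

lemma cdt_eq: "cdt \<rho> \<nu> t = gen_inv (cdf \<nu>) (cdf \<rho> t)"
  by (simp add: cdt_def cdf_of_eq_cdf)

text \<open>Where the reference CDF reaches 1 the CDT takes the junk value \<open>Inf {}\<close>, an
  unspecified real number.\<close>

lemma (in real_distribution) cdt_eq_Inf_empty:
  assumes "real_distribution \<rho>" "\<not> cdf \<rho> t < 1"
  shows "cdt \<rho> M t = Inf {}"
proof -
  have "cdf \<rho> t = 1"
    using assms real_distribution.cdf_bounded_prob[of \<rho> t] by simp
  moreover have "{s. 1 < cdf M s} = {}"
    using cdf_bounded_prob by (simp add: not_less)
  ultimately show ?thesis
    by (simp add: cdt_eq gen_inv_def)
qed

lemma (in real_distribution) normalized_cdt_Compl_const: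
  assumes "real_distribution \<rho>" "\<not> cdf \<rho> s < 1" "\<not> cdf \<rho> t < 1"
  shows "normalized_cdt \<rho> M s = normalized_cdt \<rho> M t"
  using assms by (simp add: normalized_cdt_def cdt_eq_Inf_empty)

context bounded_real_distribution
begin

lemma abs_cdt_le:
  assumes "real_distribution \<rho>"
  shows "\<bar>cdt \<rho> M t\<bar> \<le> max R \<bar>Inf {}\<bar>"
proof (cases "cdf \<rho> t < 1")
  case True
  interpret \<rho>: real_distribution \<rho> by fact
  from True have "\<bar>cdt \<rho> M t\<bar> \<le> R"
    using \<rho>.cdf_nonneg by (simp add: cdt_eq abs_gen_inv_cdf_le)
  then show ?thesis by simp
next
  case False
  then show ?thesis
    using cdt_eq_Inf_empty[OF assms] by simp
qed

lemma cdt_mono_on: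
  assumes "real_distribution \<rho>"
  shows "mono_on {t. cdf \<rho> t < 1} (cdt \<rho> M)"
proof -
  interpret \<rho>: real_distribution \<rho> by fact
  show ?thesis
    using \<rho>.cdf_nonneg \<rho>.cdf_nondecreasing by (intro mono_onI) (simp add: cdt_eq gen_inv_cdf_mono)
qed

lemma borel_measurable_cdt:
  assumes "real_distribution \<rho>"
  shows "cdt \<rho> M \<in> borel_measurable \<rho>"
proof -
  interpret \<rho>: real_distribution \<rho> by fact
  have "cdt \<rho> M \<in> borel_measurable borel"
    using cdt_mono_on[OF assms] cdt_eq_Inf_empty[OF assms]
    by (intro borel_measurable_mono_on_Compl_const[of "{t. cdf \<rho> t < 1}"]) auto
  then show ?thesis
    by (simp add: measurable_cong_sets[OF \<rho>.events_eq_borel])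
qed

lemma integrable_cdt_square_dev:
  assumes "real_distribution \<rho>"
  shows "integrable \<rho> (\<lambda>t. (cdt \<rho> M t - m)\<^sup>2)"
proof -
  interpret \<rho>: real_distribution \<rho> by fact
  have "\<bar>cdt \<rho> M t - m\<bar> \<le> max R \<bar>Inf {}\<bar> + \<bar>m\<bar>" for t
    using abs_cdt_le[OF assms, of t] abs_triangle_ineq4[of "cdt \<rho> M t" m] by simp
  then have "(cdt \<rho> M t - m)\<^sup>2 \<le> (max R \<bar>Inf {}\<bar> + \<bar>m\<bar>)\<^sup>2" for t
    by (metis abs_le_square_iff abs_of_nonneg abs_ge_zero order.trans)
  then show ?thesis
    using borel_measurable_cdt[OF assms]
    by (intro \<rho>.integrable_const_bound[where B = "(max R \<bar>Inf {}\<bar> + \<bar>m\<bar>)\<^sup>2"]) auto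
qed

lemma abs_mean_cdt_le:
  assumes "real_distribution \<rho>"
  shows "\<bar>mean_rho \<rho> (cdt \<rho> M)\<bar> \<le> max R \<bar>Inf {}\<bar>"
proof -
  interpret \<rho>: real_distribution \<rho> by fact
  have "integrable \<rho> (cdt \<rho> M)"
    using abs_cdt_le[OF assms] borel_measurable_cdt[OF assms]
    by (intro \<rho>.integrable_const_bound[where B = "max R \<bar>Inf {}\<bar>"]) auto
  then have "\<bar>mean_rho \<rho> (cdt \<rho> M)\<bar> \<le> (\<integral>t. max R \<bar>Inf {}\<bar> \<partial>\<rho>)"
    unfolding mean_rho_def using abs_cdt_le[OF assms] by (intro integral_abs_bound_integral) auto
  then show ?thesis
    using \<rho>.prob_space by simp
qed

text \<open>The CDT is at most \<open>a\<close> on a \<open>\<rho>\<close>-set of measure \<open>F\<^sub>\<nu>(a)\<close> and at least \<open>b\<close> on one of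
  measure \<open>\<nu>[b, \<infinity>)\<close>; this is where \<open>\<rho>\<close> having no atoms enters.\<close>

lemma std_cdt_ge:
  assumes \<rho>: "real_distribution \<rho>" and atomless: "\<And>x. measure \<rho> {x} = 0"
    and "a < b" "0 < e" "e \<le> cdf M a" "e \<le> measure M {b..}"
  shows "sqrt e * ((b - a) / 2) \<le> std_rho \<rho> (cdt \<rho> M)"
proof -
  interpret \<rho>: real_distribution \<rho> by fact
  define L where "L = {t. cdf \<rho> t < cdf M a}"
  define H where "H = {t. measure M {..<b} \<le> cdf \<rho> t \<and> cdf \<rho> t < 1}"
  have "L \<in> \<rho>.events" "H \<in> \<rho>.events"
    unfolding L_def H_def \<rho>.events_eq_borel by measurable
  have "\<rho>.prob L = cdf M a"
    unfolding L_def using cdf_nonneg cdf_bounded_prob by (intro \<rho>.measure_cdf_less atomless)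
  have "\<rho>.prob H = 1 - measure M {..<b}"
    unfolding H_def by (intro \<rho>.measure_cdf_between atomless) simp_all
  also have "\<dots> = measure M {b..}"
    using prob_compl[of "{..<b}"] by (simp add: Compl_eq_Diff_UNIV[symmetric])
  finally have "\<rho>.prob H = measure M {b..}" .
  have "cdt \<rho> M t \<le> a" if "t \<in> L" for t
    using that \<rho>.cdf_nonneg unfolding L_def by (simp add: cdt_eq gen_inv_cdf_le)
  moreover have "b \<le> cdt \<rho> M t" if "t \<in> H" for t
    using that unfolding H_def by (simp add: cdt_eq gen_inv_cdf_ge)
  ultimately have "min (\<rho>.prob L) (\<rho>.prob H) * ((b - a) / 2)\<^sup>2
      \<le> (\<integral>t. (cdt \<rho> M t - mean_rho \<rho> (cdt \<rho> M))\<^sup>2 \<partial>\<rho>)"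
    using \<open>L \<in> \<rho>.events\<close> \<open>H \<in> \<rho>.events\<close> \<open>a < b\<close>
    by (intro \<rho>.min_prob_mult_le_expectation_square_dev integrable_cdt_square_dev \<rho>)
  moreover have "e * ((b - a) / 2)\<^sup>2 \<le> min (\<rho>.prob L) (\<rho>.prob H) * ((b - a) / 2)\<^sup>2"
    using assms \<open>\<rho>.prob L = cdf M a\<close> \<open>\<rho>.prob H = measure M {b..}\<close>
    by (intro mult_right_mono) auto
  ultimately have "sqrt (e * ((b - a) / 2)\<^sup>2) \<le> std_rho \<rho> (cdt \<rho> M)"
    unfolding std_rho_def by (intro real_sqrt_le_mono) (rule order_trans)
  then show ?thesis
    using \<open>a < b\<close> \<open>0 < e\<close> by (simp add: real_sqrt_mult)
qed

lemma normalized_cdt_mono_on: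
  assumes "real_distribution \<rho>"
  shows "mono_on {t. cdf \<rho> t < 1} (normalized_cdt \<rho> M)"
  unfolding normalized_cdt_def using mono_onD[OF cdt_mono_on[OF assms]]
  by (intro mono_onI divide_right_mono diff_right_mono) (auto simp: std_rho_def)

lemma abs_normalized_cdt_le:
  assumes "real_distribution \<rho>" "0 < \<sigma>" "\<sigma> \<le> std_rho \<rho> (cdt \<rho> M)"
  shows "\<bar>normalized_cdt \<rho> M t\<bar> \<le> 2 * max R \<bar>Inf {}\<bar> / \<sigma>"
proof -
  have "\<bar>cdt \<rho> M t - mean_rho \<rho> (cdt \<rho> M)\<bar> \<le> 2 * max R \<bar>Inf {}\<bar>"
    using abs_cdt_le[OF assms(1), of t] abs_mean_cdt_le[OF assms(1)] by linarith
  then have "\<bar>normalized_cdt \<rho> M t\<bar> \<le> 2 * max R \<bar>Inf {}\<bar> / std_rho \<rho> (cdt \<rho> M)"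
    using assms(2,3) by (simp add: normalized_cdt_def divide_right_mono)
  also have "\<dots> \<le> 2 * max R \<bar>Inf {}\<bar> / \<sigma>"
    using assms(2,3) by (intro divide_left_mono) auto
  finally show ?thesis .
qed

end

lemma full_dim_inner_diff_nonzero:
  fixes K :: "'a::euclidean_space set"
  assumes "aff_dim K = DIM('a)" "t \<noteq> 0"
  shows "\<exists>x\<in>K. \<exists>y\<in>K. (y - x) \<bullet> t \<noteq> 0"
proof (rule ccontr)
  assume flat: "\<not> ?thesis"
  have "K \<noteq> {}"
  proof
    assume "K = {}"
    then have "aff_dim K = -1"
      by simp
    with assms(1) show False
      by simp
  qed
  then obtain x0 where "x0 \<in> K"
    by blast
  have "K \<subseteq> {x. t \<bullet> x = t \<bullet> x0}"
  proof
    fix x assume "x \<in> K"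
    with \<open>x0 \<in> K\<close> flat have "(x - x0) \<bullet> t = 0"
      by blast
    then have "x \<bullet> t = x0 \<bullet> t"
      by (simp add: inner_diff_left)
    then show "x \<in> {x. t \<bullet> x = t \<bullet> x0}"
      by (simp add: inner_commute)
  qed
  then have "aff_dim K \<le> aff_dim {x. t \<bullet> x = t \<bullet> x0}"
    by (rule aff_dim_subset)
  also have "\<dots> = int DIM('a) - 1"
    using assms(2) by simp
  finally show False
    using assms(1) by simp
qed

lemma full_dim_inner_diff_gt:
  fixes K :: "'a::euclidean_space set"
  assumes "aff_dim K = DIM('a)" "\<theta> \<noteq> 0"
  obtains x y n where "x \<in> K" "y \<in> K" "inverse (real (Suc n)) < (y - x) \<bullet> \<theta>"
proof -
  obtain x y where xy: "x \<in> K" "y \<in> K" "(y - x) \<bullet> \<theta> \<noteq> 0"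
    using full_dim_inner_diff_nonzero[OF assms] by blast
  obtain x' y' where "x' \<in> K" "y' \<in> K" "0 < (y' - x') \<bullet> \<theta>"
  proof (cases "0 < (y - x) \<bullet> \<theta>")
    case False
    with xy that[of y x] show ?thesis
      by (simp add: inner_diff_left)
  qed (use xy that in blast)
  obtain n where "inverse (real (Suc n)) < (y' - x') \<bullet> \<theta>"
    using reals_Archimedean[OF \<open>0 < (y' - x') \<bullet> \<theta>\<close>] ..
  with \<open>x' \<in> K\<close> \<open>y' \<in> K\<close> show ?thesis
    by (rule that)
qed

lemma full_dim_finite_sphere_cover:
  fixes K :: "'a::euclidean_space set"
  assumes "aff_dim K = DIM('a)"
  obtains J where "finite J" "J \<subseteq> K \<times> K \<times> UNIV"
    "\<And>\<theta>. norm \<theta> = 1 \<Longrightarrow> \<exists>x y n. (x, y, n) \<in> J \<and> inverse (real (Suc n)) < (y - x) \<bullet> \<theta>"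
proof -
  define U :: "'a \<times> 'a \<times> nat \<Rightarrow> 'a set"
    where "U = (\<lambda>(x, y, n). {\<theta>. inverse (real (Suc n)) < (y - x) \<bullet> \<theta>})"
  have "open (U i)" if "i \<in> K \<times> K \<times> UNIV" for i
    by (simp add: U_def case_prod_unfold open_halfspace_gt)
  moreover have "sphere 0 1 \<subseteq> (\<Union>i\<in>K \<times> K \<times> UNIV. U i)"
  proof
    fix \<theta> :: 'a assume "\<theta> \<in> sphere 0 1"
    then have "\<theta> \<noteq> 0"
      by auto
    then obtain x y n where "x \<in> K" "y \<in> K" "inverse (real (Suc n)) < (y - x) \<bullet> \<theta>"
      by (rule full_dim_inner_diff_gt[OF assms])
    then show "\<theta> \<in> (\<Union>i\<in>K \<times> K \<times> UNIV. U i)"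
      by (intro UN_I[of "(x, y, n)"]) (simp_all add: U_def)
  qed
  ultimately obtain J where J: "J \<subseteq> K \<times> K \<times> UNIV" "finite J" "sphere 0 1 \<subseteq> (\<Union>i\<in>J. U i)"
    by (rule compactE_image[OF compact_sphere])
  have "\<exists>x y n. (x, y, n) \<in> J \<and> inverse (real (Suc n)) < (y - x) \<bullet> \<theta>" if "norm \<theta> = 1" for \<theta>
  proof -
    have "\<theta> \<in> sphere 0 1"
      using that by simp
    then obtain i where "i \<in> J" "\<theta> \<in> U i"
      using J(3) by blast
    moreover obtain x y n where "i = (x, y, n)"
      by (rule prod_cases3)
    ultimately have "(x, y, n) \<in> J" "inverse (real (Suc n)) < (y - x) \<bullet> \<theta>"
      by (simp_all add: U_def)
    then show ?thesis
      by blast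
  qed
  then show ?thesis
    by (rule that[OF J(2,1)])
qed

lemma full_dim_uniform_width:
  fixes K :: "'a::euclidean_space set"
  assumes "aff_dim K = DIM('a)"
  obtains P D where "finite P" "P \<subseteq> K" "0 < D"
    "\<And>\<theta>. norm \<theta> = 1 \<Longrightarrow> \<exists>x\<in>P. \<exists>y\<in>P. D \<le> (y - x) \<bullet> \<theta>"
proof -
  obtain J where J: "finite J" "J \<subseteq> K \<times> K \<times> UNIV"
    and cover: "\<And>\<theta>. norm \<theta> = 1 \<Longrightarrow> \<exists>x y n. (x, y, n) \<in> J \<and> inverse (real (Suc n)) < (y - x) \<bullet> \<theta>"
    by (rule full_dim_finite_sphere_cover[OF assms]) (rule that)
  define P where "P = fst ` J \<union> (fst \<circ> snd) ` J"
  define N where "N = Max ((snd \<circ> snd) ` J)"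
  show ?thesis
  proof (rule that[of P "inverse (real (Suc N))"])
    show "finite P"
      unfolding P_def using J(1) by blast
    show "P \<subseteq> K"
      unfolding P_def using J(2) by auto
    show "0 < inverse (real (Suc N))"
      by simp
    fix \<theta> :: 'a assume "norm \<theta> = 1"
    then obtain x y n where "(x, y, n) \<in> J" and width: "inverse (real (Suc n)) < (y - x) \<bullet> \<theta>"
      using cover[OF \<open>norm \<theta> = 1\<close>] by blast
    then have "x \<in> P" "y \<in> P"
      unfolding P_def by (metis UnI1 fst_conv image_eqI, metis UnI2 comp_apply fst_conv snd_conv image_eqI)
    have "n \<in> (snd \<circ> snd) ` J"
      using \<open>(x, y, n) \<in> J\<close> by (metis comp_apply image_eqI snd_conv)
    then have "n \<le> N"
      unfolding N_def using J(1) by simp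
    then have "inverse (real (Suc N)) \<le> inverse (real (Suc n))"
      by (intro le_imp_inverse_le) auto
    also note width
    finally have "inverse (real (Suc N)) \<le> (y - x) \<bullet> \<theta>"
      by (rule less_imp_le)
    with \<open>x \<in> P\<close> \<open>y \<in> P\<close> show "\<exists>x\<in>P. \<exists>y\<in>P. inverse (real (Suc N)) \<le> (y - x) \<bullet> \<theta>"
      by blast
  qed
qed

lemma borel_measurable_inner_left:
  assumes "sets M = sets borel"
  shows "(\<lambda>x. x \<bullet> \<theta>) \<in> borel_measurable M"
  by (subst measurable_cong_sets[OF assms refl])
    (intro borel_measurable_continuous_onI continuous_intros)

lemma abs_inner_diff_le_dist:
  assumes "norm \<theta> = 1"
  shows "\<bar>x \<bullet> \<theta> - y \<bullet> \<theta>\<bar> \<le> dist x y"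
  using Cauchy_Schwarz_ineq2[of "x - y" \<theta>] assms by (simp add: dist_norm inner_diff_left)

lemma measure_le_radon:
  assumes "finite_measure \<mu>" "sets \<mu> = sets borel" "B \<in> sets borel" "\<And>x. x \<in> A \<Longrightarrow> x \<bullet> \<theta> \<in> B"
  shows "measure \<mu> A \<le> measure (radon \<theta> \<mu>) B"
proof -
  have meas: "(\<lambda>x. x \<bullet> \<theta>) \<in> borel_measurable \<mu>"
    using assms(2) by (rule borel_measurable_inner_left)
  have "measure \<mu> A \<le> measure \<mu> ((\<lambda>x. x \<bullet> \<theta>) -` B \<inter> space \<mu>)"
    using assms sets_eq_imp_space_eq[OF assms(2)] measurable_sets[OF meas assms(3)]
    by (intro finite_measure.finite_measure_mono) auto
  also have "\<dots> = measure (radon \<theta> \<mu>) B"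
    unfolding radon_def using meas assms(3) by (simp add: measure_distr)
  finally show ?thesis .
qed

lemma bounded_real_distribution_radon:
  assumes "prob_space \<mu>" "sets \<mu> = sets borel" "\<And>x. x \<in> msupp \<mu> \<Longrightarrow> norm x \<le> R"
    and "norm \<theta> = 1"
  shows "bounded_real_distribution (radon \<theta> \<mu>) R"
proof -
  interpret prob_space \<mu> by fact
  have meas: "(\<lambda>x. x \<bullet> \<theta>) \<in> borel_measurable \<mu>"
    using assms(2) by (rule borel_measurable_inner_left)
  have "real_distribution (radon \<theta> \<mu>)"
    unfolding radon_def using meas by (rule real_distribution_distr)
  moreover have "AE x in \<mu>. \<bar>x \<bullet> \<theta>\<bar> \<le> R"
    using AE_in_msupp[OF assms(2)]
  proof eventually_elim
    case (elim x)
    then show ?case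
      using assms(3)[of x] assms(4) Cauchy_Schwarz_ineq2[of x \<theta>] by simp
  qed
  then have "AE s in radon \<theta> \<mu>. \<bar>s\<bar> \<le> R"
    unfolding radon_def using meas by (subst AE_distr_iff) auto
  ultimately show ?thesis
    by (simp add: bounded_real_distribution_def bounded_real_distribution_axioms_def)
qed

lemma Pc_star_radon_bounded:
  assumes "\<mu> \<in> Pc_star"
  obtains R where "\<And>\<theta>. \<theta> \<in> S1 \<Longrightarrow> bounded_real_distribution (radon \<theta> \<mu>) R"
proof -
  have \<mu>: "prob_space \<mu>" "sets \<mu> = sets borel" "compact (msupp \<mu>)"
    using assms unfolding Pc_star_def by auto
  obtain R where R: "\<And>x. x \<in> msupp \<mu> \<Longrightarrow> norm x \<le> R"
    using compact_imp_bounded[OF \<mu>(3)] unfolding bounded_iff by blast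
  have "bounded_real_distribution (radon \<theta> \<mu>) R" if "\<theta> \<in> S1" for \<theta>
    using that unfolding S1_def by (auto intro: bounded_real_distribution_radon[OF \<mu>(1,2) R])
  then show ?thesis
    by (rule that)
qed

lemma std_cdt_radon_ge:
  assumes \<rho>: "real_distribution \<rho>" "\<And>x. measure \<rho> {x} = 0"
    and \<mu>: "prob_space \<mu>" "sets \<mu> = sets borel"
    and \<nu>: "bounded_real_distribution (radon \<theta> \<mu>) R"
    and "norm \<theta> = 1" "0 < D" "D \<le> (y - x) \<bullet> \<theta>" "0 < e"
    and "e \<le> measure \<mu> (ball x (D / 4))" "e \<le> measure \<mu> (ball y (D / 4))"
  shows "sqrt e * (D / 4) \<le> std_rho \<rho> (cdt \<rho> (radon \<theta> \<mu>))"
proof -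
  interpret \<mu>: prob_space \<mu> by fact
  define a where "a = x \<bullet> \<theta> + D / 4"
  define b where "b = y \<bullet> \<theta> - D / 4"
  have near: "w \<bullet> \<theta> - D / 4 < z \<bullet> \<theta> \<and> z \<bullet> \<theta> < w \<bullet> \<theta> + D / 4" if "z \<in> ball w (D / 4)" for z w
    using that abs_inner_diff_le_dist[OF \<open>norm \<theta> = 1\<close>, of z w] by (auto simp: abs_le_iff dist_commute)
  have "z \<bullet> \<theta> \<in> {..a}" if "z \<in> ball x (D / 4)" for z
    using near[OF that] unfolding a_def by simp
  then have "measure \<mu> (ball x (D / 4)) \<le> measure (radon \<theta> \<mu>) {..a}"
    by (intro measure_le_radon[OF \<mu>.finite_measure_axioms \<mu>(2)]) auto
  then have "e \<le> cdf (radon \<theta> \<mu>) a"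
    unfolding cdf_def using \<open>e \<le> measure \<mu> (ball x (D / 4))\<close> by simp
  have "z \<bullet> \<theta> \<in> {b..}" if "z \<in> ball y (D / 4)" for z
    using near[OF that] unfolding b_def by simp
  then have "measure \<mu> (ball y (D / 4)) \<le> measure (radon \<theta> \<mu>) {b..}"
    by (intro measure_le_radon[OF \<mu>.finite_measure_axioms \<mu>(2)]) auto
  then have "e \<le> measure (radon \<theta> \<mu>) {b..}"
    using \<open>e \<le> measure \<mu> (ball y (D / 4))\<close> by simp
  have "D / 2 \<le> b - a"
    unfolding a_def b_def using \<open>D \<le> (y - x) \<bullet> \<theta>\<close> by (simp add: inner_diff_left)
  then have "sqrt e * (D / 4) \<le> sqrt e * ((b - a) / 2)"
    using \<open>0 < e\<close> by (intro mult_left_mono) auto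
  also have "\<dots> \<le> std_rho \<rho> (cdt \<rho> (radon \<theta> \<mu>))"
    using \<open>D / 2 \<le> b - a\<close> \<open>0 < D\<close> \<open>0 < e\<close> \<open>e \<le> cdf (radon \<theta> \<mu>) a\<close> \<open>e \<le> measure (radon \<theta> \<mu>) {b..}\<close>
    by (intro bounded_real_distribution.std_cdt_ge[OF \<nu> \<rho>]) auto
  finally show ?thesis .
qed

lemma std_cdt_radon_uniformly_positive:
  assumes \<rho>: "real_distribution \<rho>" "\<And>x. measure \<rho> {x} = 0" and "\<mu> \<in> Pc_star"
    and \<nu>: "\<And>\<theta>. \<theta> \<in> S1 \<Longrightarrow> bounded_real_distribution (radon \<theta> \<mu>) R"
  obtains \<sigma> where "0 < \<sigma>" "\<And>\<theta>. \<theta> \<in> S1 \<Longrightarrow> \<sigma> \<le> std_rho \<rho> (cdt \<rho> (radon \<theta> \<mu>))"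
proof -
  have \<mu>: "prob_space \<mu>" "sets \<mu> = sets borel" and "1 < aff_dim (msupp \<mu>)"
    using \<open>\<mu> \<in> Pc_star\<close> unfolding Pc_star_def by auto
  interpret \<mu>: prob_space \<mu> by fact
  have "aff_dim (msupp \<mu>) = DIM(real^2)"
    using \<open>1 < aff_dim (msupp \<mu>)\<close> aff_dim_le_DIM[of "msupp \<mu>"] by simp
  then obtain P D where P: "finite P" "P \<subseteq> msupp \<mu>" "0 < D"
    and width: "\<And>\<theta>. norm \<theta> = 1 \<Longrightarrow> \<exists>x\<in>P. \<exists>y\<in>P. D \<le> (y - x) \<bullet> \<theta>"
    using full_dim_uniform_width by blast
  \<comment> \<open>The 1 only keeps the minimum well defined when \<open>P = {}\<close>.\<close>
  define e where "e = Min (insert 1 ((\<lambda>p. measure \<mu> (ball p (D / 4))) ` P))"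
  have "0 < measure \<mu> (ball p (D / 4))" if "p \<in> P" for p
    using that P unfolding msupp_def by (auto simp: \<mu>.emeasure_eq_measure)
  then have "0 < e"
    unfolding e_def using P(1) by simp
  have e_le: "e \<le> measure \<mu> (ball p (D / 4))" if "p \<in> P" for p
    unfolding e_def using P(1) that by simp
  show ?thesis
  proof (rule that[of "sqrt e * (D / 4)"])
    show "0 < sqrt e * (D / 4)"
      using \<open>0 < e\<close> \<open>0 < D\<close> by simp
    fix \<theta> assume "\<theta> \<in> S1"
    then have "norm \<theta> = 1"
      by (simp add: S1_def)
    then obtain x y where "x \<in> P" "y \<in> P" "D \<le> (y - x) \<bullet> \<theta>"
      using width by blast
    then show "sqrt e * (D / 4) \<le> std_rho \<rho> (cdt \<rho> (radon \<theta> \<mu>))"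
      using \<open>norm \<theta> = 1\<close> \<open>0 < D\<close> \<open>0 < e\<close> e_le
      by (intro std_cdt_radon_ge[OF \<rho> \<mu> \<nu>[OF \<open>\<theta> \<in> S1\<close>]]) auto
  qed
qed

lemma abs_Nmax_le:
  assumes \<rho>: "real_distribution \<rho>"
    and \<nu>: "\<And>\<theta>. \<theta> \<in> S1 \<Longrightarrow> bounded_real_distribution (radon \<theta> \<mu>) R"
    and "0 < \<sigma>" "\<And>\<theta>. \<theta> \<in> S1 \<Longrightarrow> \<sigma> \<le> std_rho \<rho> (cdt \<rho> (radon \<theta> \<mu>))"
  shows "\<bar>Nmax \<rho> \<mu> t\<bar> \<le> ereal (2 * max R \<bar>Inf {}\<bar> / \<sigma>)"
proof -
  have "axis 1 1 \<in> S1"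
    by (simp add: S1_def)
  then show ?thesis
    unfolding Nmax_def Ntheta_eq_normalized_cdt using assms(3,4)
    by (intro abs_SUP_ereal_le bounded_real_distribution.abs_normalized_cdt_le[OF \<nu> \<rho>]) auto
qed

lemma borel_measurable_Nmax:
  assumes \<rho>: "real_distribution \<rho>"
    and \<nu>: "\<And>\<theta>. \<theta> \<in> S1 \<Longrightarrow> bounded_real_distribution (radon \<theta> \<mu>) R"
    and finite: "\<And>t. \<bar>Nmax \<rho> \<mu> t\<bar> \<noteq> \<infinity>"
  shows "Nmax \<rho> \<mu> \<in> borel_measurable borel"
proof (rule borel_measurable_ereal_mono_on_Compl_const[OF _ _ _ finite])
  show "{t. cdf \<rho> t < 1} \<in> sets borel"
    using real_distribution.borel_measurable_cdf[OF \<rho>] by measurable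
  show "mono_on {t. cdf \<rho> t < 1} (Nmax \<rho> \<mu>)"
    unfolding Nmax_def Ntheta_eq_normalized_cdt
    using bounded_real_distribution.normalized_cdt_mono_on[OF \<nu> \<rho>]
    by (intro mono_on_SUP) (auto simp: mono_on_def)
  fix s t assume "s \<notin> {t. cdf \<rho> t < 1}" "t \<notin> {t. cdf \<rho> t < 1}"
  then have "\<not> cdf \<rho> s < 1" "\<not> cdf \<rho> t < 1"
    by simp_all
  then have "normalized_cdt \<rho> (radon \<theta> \<mu>) s = normalized_cdt \<rho> (radon \<theta> \<mu>) t" if "\<theta> \<in> S1" for \<theta>
    using \<nu>[OF that] unfolding bounded_real_distribution_def
    by (intro real_distribution.normalized_cdt_Compl_const[OF _ \<rho>]) simp_all
  then show "Nmax \<rho> \<mu> s = Nmax \<rho> \<mu> t"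
    unfolding Nmax_def Ntheta_eq_normalized_cdt by (intro SUP_cong) simp_all
qed

theorem proposition7:
  fixes \<rho> :: "real measure" and \<mu> :: "(real^2) measure"
  assumes "prob_space \<rho>" and "sets \<rho> = sets borel"
    and "\<And>x. measure \<rho> {x} = 0"
    and "\<mu> \<in> Pc_star"
  shows "Linf \<rho> (Nmax \<rho> \<mu>)"
proof -
  have \<rho>: "real_distribution \<rho>"
    using assms(1,2) by (simp add: real_distribution_def real_distribution_axioms_def)
  obtain R where \<nu>: "\<And>\<theta>. \<theta> \<in> S1 \<Longrightarrow> bounded_real_distribution (radon \<theta> \<mu>) R"
    using Pc_star_radon_bounded[OF assms(4)] by blast
  obtain \<sigma> where \<sigma>: "0 < \<sigma>" "\<And>\<theta>. \<theta> \<in> S1 \<Longrightarrow> \<sigma> \<le> std_rho \<rho> (cdt \<rho> (radon \<theta> \<mu>))"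
    using std_cdt_radon_uniformly_positive[OF \<rho> assms(3,4) \<nu>] by blast
  have bounded: "\<bar>Nmax \<rho> \<mu> t\<bar> \<le> ereal (2 * max R \<bar>Inf {}\<bar> / \<sigma>)" for t
    using abs_Nmax_le[OF \<rho> \<nu> \<sigma>] .
  have "\<bar>Nmax \<rho> \<mu> t\<bar> \<noteq> \<infinity>" for t
    using bounded[of t] by auto
  then have "Nmax \<rho> \<mu> \<in> borel_measurable \<rho>"
    using borel_measurable_Nmax[OF \<rho> \<nu>] measurable_cong_sets[OF assms(2) refl] by blast
  with bounded show ?thesis
    unfolding Linf_def by blast
qed

end
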